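(* Let $K\ge1$, let $q_1,\dots,q_K$ be distinct primes satisfying $\tfrac12<q_j/q_{j'}<2$ for all $j,j'$, and let $\phi:\mathbb Z\to\mathbb R$ have finite support. Then for every $\tilde\lambda>0$, $$\#\{n\in\mathbb Z:\ \mathcal B^*(\phi,n)>\tilde\lambda\}\le\frac{4}{\tilde\lambda}\,\|\phi\|_{\ell^1}.$$
   Context: Let $p=q_1q_2\cdots q_K$ and $\tilde q_j=p/q_j$. For $n\in\mathbb Z$ and integer $N\ge1$ put $t_0(n,N)=\lfloor n/p\rfloor+1$, $t_1(n,N)=\lfloor (n+N)/p\rfloor+1$, $N'=t_1(n,N)-t_0(n,N)+1$, $I(n,N)=[(t_0(n,N)-1)p-n,\ t_1(n,N)p-n)\cap\mathbb Z$, and $\nu(n,N,j)=N'\tilde q_j$. Define $$\mathcal B(\phi,n,N,j)=\frac1{\nu(n,N,j)}\sum_{l\in\mathbb Z:\ lq_j\in I(n,N)}\phi(n+lq_j),\qquad \mathcal B(\phi,n,N)=\frac{\sum_{j=1}^K\nu(n,N,j)\,\mathcal B(\phi,n,N,j)}{\sum_{j=1}^K\nu(n,N,j)},$$ and $\mathcal B^*(\phi,n)=\sup_{N\ge1}|\mathcal B(\phi,n,N)|$. $\|\phi\|_{\ell^1}=\sum_{n\in\mathbb Z}|\phi(n)|$. *)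

theory Defs
  imports "HOL-Analysis.Analysis"
begin

definition pprod :: "nat \<Rightarrow> (nat \<Rightarrow> int) \<Rightarrow> int" where
  "pprod K q = (\<Prod>j=1..K. q j)"

definition qtilde :: "nat \<Rightarrow> (nat \<Rightarrow> int) \<Rightarrow> nat \<Rightarrow> int" where
  "qtilde K q j = pprod K q div q j"

definition t0 :: "nat \<Rightarrow> (nat \<Rightarrow> int) \<Rightarrow> int \<Rightarrow> nat \<Rightarrow> int" where
  "t0 K q n N = \<lfloor>real_of_int n / real_of_int (pprod K q)\<rfloor> + 1"

definition t1 :: "nat \<Rightarrow> (nat \<Rightarrow> int) \<Rightarrow> int \<Rightarrow> nat \<Rightarrow> int" where
  "t1 K q n N = \<lfloor>real_of_int (n + int N) / real_of_int (pprod K q)\<rfloor> + 1"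

definition Nprime :: "nat \<Rightarrow> (nat \<Rightarrow> int) \<Rightarrow> int \<Rightarrow> nat \<Rightarrow> int" where
  "Nprime K q n N = t1 K q n N - t0 K q n N + 1"

definition Iset :: "nat \<Rightarrow> (nat \<Rightarrow> int) \<Rightarrow> int \<Rightarrow> nat \<Rightarrow> int set" where
  "Iset K q n N = {(t0 K q n N - 1) * pprod K q - n ..< t1 K q n N * pprod K q - n}"

definition nu :: "nat \<Rightarrow> (nat \<Rightarrow> int) \<Rightarrow> int \<Rightarrow> nat \<Rightarrow> nat \<Rightarrow> int" where
  "nu K q n N j = Nprime K q n N * qtilde K q j"

definition Bj :: "nat \<Rightarrow> (nat \<Rightarrow> int) \<Rightarrow> (int \<Rightarrow> real) \<Rightarrow> int \<Rightarrow> nat \<Rightarrow> nat \<Rightarrow> real" where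
  "Bj K q \<phi> n N j = (1 / real_of_int (nu K q n N j)) *
     (\<Sum>l\<in>{l::int. l * q j \<in> Iset K q n N}. \<phi> (n + l * q j))"

definition B :: "nat \<Rightarrow> (nat \<Rightarrow> int) \<Rightarrow> (int \<Rightarrow> real) \<Rightarrow> int \<Rightarrow> nat \<Rightarrow> real" where
  "B K q \<phi> n N = (\<Sum>j=1..K. real_of_int (nu K q n N j) * Bj K q \<phi> n N j)
                   / (\<Sum>j=1..K. real_of_int (nu K q n N j))"

definition Bstar :: "nat \<Rightarrow> (nat \<Rightarrow> int) \<Rightarrow> (int \<Rightarrow> real) \<Rightarrow> int \<Rightarrow> ereal" where
  "Bstar K q \<phi> n = (SUP N\<in>{1..}. ereal \<bar>B K q \<phi> n N\<bar>)"

definition l1norm :: "(int \<Rightarrow> real) \<Rightarrow> real" where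
  "l1norm \<phi> = (\<Sum>n\<in>{n. \<phi> n \<noteq> 0}. \<bar>\<phi> n\<bar>)"

end

theory Submission
  imports Defs
begin

text \<open>
  Let p = q_1 ... q_K. Every q_j divides p, so the set averaged in B(phi, n, N) is the union of
  the progressions n + q_j Z over the period blocks [t p, (t + 1) p) with n div p <= t <=
  (n + N) div p, and it depends on n only through r = n mod p. Hence |B| is at most the average
  over these blocks of the block mass of |phi|, where each point m is counted once for every j
  with q_j dividing m - r, normalised by the sum of the qtilde_j. For fixed r, the left ends of
  runs of blocks with average above lam are few by the one-sided (rising sun) covering argument:
  take the leftmost one together with its run, and recurse to the right of that run. Summed
  over r, every point m is counted exactly sum_j qtilde_j times, so the level set has at most
  ||phi||_1 / lam points. This is the constant 1 rather than 4, and only the positivity of the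
  q_j is used.
\<close>

lemma le_div_iff_mult_le_int:
  fixes a m p :: int
  assumes "p > 0"
  shows "a \<le> m div p \<longleftrightarrow> a * p \<le> m"
proof
  assume "a \<le> m div p"
  then have "a * p \<le> m div p * p" using assms by simp
  also have "\<dots> \<le> m" using assms by (simp add: minus_mod_eq_div_mult [symmetric])
  finally show "a * p \<le> m" .
next
  assume "a * p \<le> m"
  then have "a * p div p \<le> m div p" using assms by (intro zdiv_mono1)
  then show "a \<le> m div p" using assms by simp
qed

lemma div_less_iff_less_mult_int:
  fixes b m p :: int
  assumes "p > 0"
  shows "m div p < b \<longleftrightarrow> m < b * p"
  using le_div_iff_mult_le_int [OF assms] by (meson not_le)

lemma div_in_atLeastAtMost_iff:
  fixes a b m p :: int
  assumes "p > 0"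
  shows "m div p \<in> {a..b} \<longleftrightarrow> m \<in> {a * p..<(b + 1) * p}"
  using le_div_iff_mult_le_int [OF assms, of a m] div_less_iff_less_mult_int [OF assms, of m "b + 1"]
  by auto

lemma card_residue_class_atLeastLessThan:
  fixes q p m :: int
  assumes q: "q > 0" and "q dvd p"
  shows "card {r \<in> {0..<p}. q dvd m - r} = nat (p div q)"
proof -
  define t where "t = p div q"
  have p: "p = t * q" using assms by (simp add: t_def)
  have "{r \<in> {0..<p}. q dvd m - r} = (\<lambda>k. m mod q + q * k) ` {0..<t}"
  proof (intro set_eqI iffI)
    fix r assume r: "r \<in> {r \<in> {0..<p}. q dvd m - r}"
    then have "m mod q = r mod q" by (simp add: mod_eq_dvd_iff)
    then have "r = m mod q + q * (r div q)" by (metis mod_mult_div_eq)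
    moreover have "r div q \<in> {0..<t}"
      using r q by (simp add: pos_imp_zdiv_nonneg_iff div_less_iff_less_mult_int p)
    ultimately show "r \<in> (\<lambda>k. m mod q + q * k) ` {0..<t}" by (rule image_eqI)
  next
    fix r assume "r \<in> (\<lambda>k. m mod q + q * k) ` {0..<t}"
    then obtain k where k: "0 \<le> k" "k < t" and r: "r = m mod q + q * k" by auto
    have "q * k + q \<le> t * q" using mult_left_mono [of "k + 1" t q] k q by (simp add: algebra_simps)
    moreover have "0 \<le> q * k" using k q by simp
    moreover have "0 \<le> m mod q" "m mod q < q" using q by simp_all
    ultimately have "0 \<le> r" "r < p" unfolding r p by linarith+
    moreover have "q dvd m - r" using r by (simp add: mod_eq_dvd_iff [symmetric])
    ultimately show "r \<in> {r \<in> {0..<p}. q dvd m - r}" by simp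
  qed
  moreover have "inj_on (\<lambda>k. m mod q + q * k) {0..<t}" using q by (auto simp: inj_on_def)
  ultimately show ?thesis by (simp add: card_image t_def)
qed

definition exceeding_left_ends :: "real \<Rightarrow> (int \<Rightarrow> real) \<Rightarrow> int set" where
  "exceeding_left_ends c f = {a. \<exists>b\<ge>a. c * real_of_int (b - a + 1) < (\<Sum>t=a..b. f t)}"

lemma card_exceeding_left_ends_subset:
  fixes f :: "int \<Rightarrow> real"
  assumes f_nonneg: "\<And>t. f t \<ge> 0" and "finite D" and f_supp: "\<And>t. f t \<noteq> 0 \<Longrightarrow> t \<in> D"
    and "c \<ge> 0" and "finite A" and "A \<subseteq> exceeding_left_ends c f \<inter> {s..}"
  shows "c * real (card A) \<le> (\<Sum>t\<in>D \<inter> {s..}. f t)"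
  using assms(5,6)
proof (induction "card A" arbitrary: A s rule: less_induct)
  case less
  show ?case
  proof (cases "A = {}")
    case True
    then show ?thesis by (simp add: sum_nonneg f_nonneg)
  next
    case False
    define a where "a = Min A"
    have "a \<in> A" and a_min: "\<And>x. x \<in> A \<Longrightarrow> a \<le> x"
      using False less.prems(1) by (simp_all add: a_def)
    then have "s \<le> a" and "a \<in> exceeding_left_ends c f" using less.prems(2) by auto
    then obtain b where "a \<le> b" and b: "c * real_of_int (b - a + 1) < (\<Sum>t=a..b. f t)"
      unfolding exceeding_left_ends_def by blast
    define A' where "A' = A \<inter> {b + 1..}"
    have "a \<notin> A'" using \<open>a \<le> b\<close> by (simp add: A'_def)
    then have "A' \<subset> A" using \<open>a \<in> A\<close> unfolding A'_def by blast
    then have IH: "c * real (card A') \<le> (\<Sum>t\<in>D \<inter> {b + 1..}. f t)"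
      using less.prems by (intro less.hyps psubset_card_mono) (auto simp: A'_def)
    have "card A \<le> card ({a..b} \<union> A')"
      using a_min less.prems(1) by (intro card_mono) (auto simp: A'_def)
    also have "\<dots> \<le> card {a..b} + card A'" by (rule card_Un_le)
    finally have "c * real (card A) \<le> c * real_of_int (b - a + 1) + c * real (card A')"
      using \<open>a \<le> b\<close> \<open>c \<ge> 0\<close> by (simp add: mult_left_mono flip: distrib_left)
    also have "\<dots> \<le> (\<Sum>t\<in>D \<inter> {a..b}. f t) + (\<Sum>t\<in>D \<inter> {b + 1..}. f t)"
    proof -
      have "(\<Sum>t=a..b. f t) = (\<Sum>t\<in>D \<inter> {a..b}. f t)"
        using f_supp by (intro sum.mono_neutral_right) auto
      then show ?thesis using b IH by linarith
    qed
    also have "\<dots> = (\<Sum>t\<in>D \<inter> {a..b} \<union> D \<inter> {b + 1..}. f t)"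
      using \<open>finite D\<close> by (intro sum.union_disjoint [symmetric]) auto
    also have "\<dots> \<le> (\<Sum>t\<in>D \<inter> {s..}. f t)"
      using \<open>finite D\<close> \<open>s \<le> a\<close> \<open>a \<le> b\<close> f_nonneg by (intro sum_mono2) auto
    finally show ?thesis .
  qed
qed

lemma exceeding_left_ends_bound:
  fixes f :: "int \<Rightarrow> real"
  assumes f_nonneg: "\<And>t. f t \<ge> 0" and D: "finite D"
    and f_supp: "\<And>t. f t \<noteq> 0 \<Longrightarrow> t \<in> D" and c: "c > 0"
  shows "finite (exceeding_left_ends c f)
    \<and> c * real (card (exceeding_left_ends c f)) \<le> (\<Sum>t\<in>D. f t)"
proof -
  have bound: "c * real (card A) \<le> (\<Sum>t\<in>D. f t)" if "finite A" "A \<subseteq> exceeding_left_ends c f" for A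
  proof -
    define s where "s = Min (insert 0 (A \<union> D))"
    have "A \<subseteq> {s..}" "D \<inter> {s..} = D" using that(1) D by (auto simp: s_def)
    then show ?thesis
      using card_exceeding_left_ends_subset [OF f_nonneg D f_supp _ that(1), where s = s] c that(2) by auto
  qed
  have "finite (exceeding_left_ends c f)
    \<and> card (exceeding_left_ends c f) \<le> nat \<lfloor>(\<Sum>t\<in>D. f t) / c\<rfloor>"
  proof (rule finite_if_finite_subsets_card_bdd)
    fix A assume "A \<subseteq> exceeding_left_ends c f" "finite A"
    then have "real (card A) \<le> (\<Sum>t\<in>D. f t) / c" using bound c by (simp add: field_simps)
    then show "card A \<le> nat \<lfloor>(\<Sum>t\<in>D. f t) / c\<rfloor>" by linarith
  qed
  with bound show ?thesis by blast
qed

lemma dvd_pprod: "j \<in> {1..K} \<Longrightarrow> q j dvd pprod K q"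
  unfolding pprod_def by auto

lemma pprod_pos: "\<forall>j\<in>{1..K}. q j > 0 \<Longrightarrow> pprod K q > 0"
  unfolding pprod_def by (intro prod_pos) auto

lemma qtilde_pos:
  assumes "\<forall>j\<in>{1..K}. q j > 0" and "j \<in> {1..K}"
  shows "qtilde K q j > 0"
proof -
  have "q j * qtilde K q j = pprod K q" using dvd_pprod [OF assms(2)] by (simp add: qtilde_def)
  then show ?thesis using pprod_pos [OF assms(1)] assms by (metis zero_less_mult_pos)
qed

lemma sum_qtilde_pos:
  assumes "\<forall>j\<in>{1..K}. q j > 0" and "K \<ge> 1"
  shows "(\<Sum>j=1..K. real_of_int (qtilde K q j)) > 0"
  using qtilde_pos [OF assms(1)] assms(2) by (intro sum_pos) auto

lemma t0_eq: "t0 K q n N = n div pprod K q + 1"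
  unfolding t0_def floor_divide_of_int_eq ..

lemma t1_eq: "t1 K q n N = (n + int N) div pprod K q + 1"
  unfolding t1_def floor_divide_of_int_eq ..

lemma Nprime_pos: "pprod K q > 0 \<Longrightarrow> Nprime K q n N > 0"
  unfolding Nprime_def t0_eq t1_eq using zdiv_mono1 [of n "n + int N"] by simp

lemma Iset_eq:
  "Iset K q n N = {n div pprod K q * pprod K q - n..<((n + int N) div pprod K q + 1) * pprod K q - n}"
  unfolding Iset_def t0_eq t1_eq by simp

definition coverage :: "nat \<Rightarrow> (nat \<Rightarrow> int) \<Rightarrow> int \<Rightarrow> int \<Rightarrow> nat" where
  "coverage K q r m = card {j \<in> {1..K}. q j dvd m - r}"

lemma coverage_eq_sum: "real (coverage K q r m) = (\<Sum>j=1..K. of_bool (q j dvd m - r))"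
  unfolding coverage_def by (simp add: Int_def)

lemma coverage_mod_pprod: "coverage K q (r mod pprod K q) m = coverage K q r m"
proof -
  have "q j dvd m - r mod pprod K q \<longleftrightarrow> q j dvd m - r" if "j \<in> {1..K}" for j
    using mod_mod_cancel [OF dvd_pprod [OF that]] by (simp add: mod_eq_dvd_iff [symmetric])
  then show ?thesis unfolding coverage_def by (auto intro!: arg_cong [where f = card])
qed

lemma sum_coverage_period:
  assumes qpos: "\<forall>j\<in>{1..K}. q j > 0"
  shows "(\<Sum>r\<in>{0..<pprod K q}. real (coverage K q r m)) = (\<Sum>j=1..K. real_of_int (qtilde K q j))"
proof -
  have "(\<Sum>r\<in>{0..<pprod K q}. of_bool (q j dvd m - r)) = real_of_int (qtilde K q j)"
    if j: "j \<in> {1..K}" for j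
  proof -
    have "(\<Sum>r\<in>{0..<pprod K q}. of_bool (q j dvd m - r) :: real)
        = real (card {r \<in> {0..<pprod K q}. q j dvd m - r})"
      by (simp add: Int_def)
    also have "\<dots> = real (nat (qtilde K q j))"
      using qpos j card_residue_class_atLeastLessThan [OF _ dvd_pprod [OF j]]
      by (simp add: qtilde_def)
    finally show ?thesis using qtilde_pos [OF qpos j] by simp
  qed
  then show ?thesis unfolding coverage_eq_sum by (subst sum.swap) simp
qed

definition block_mass :: "nat \<Rightarrow> (nat \<Rightarrow> int) \<Rightarrow> (int \<Rightarrow> real) \<Rightarrow> int \<Rightarrow> int \<Rightarrow> real" where
  "block_mass K q \<phi> r t =
     (\<Sum>m | \<phi> m \<noteq> 0 \<and> m div pprod K q = t. real (coverage K q r m) * \<bar>\<phi> m\<bar>)"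

lemma block_mass_nonneg: "block_mass K q \<phi> r t \<ge> 0"
  unfolding block_mass_def by (intro sum_nonneg) simp

lemma block_mass_support:
  assumes "block_mass K q \<phi> r t \<noteq> 0"
  shows "t \<in> (\<lambda>m. m div pprod K q) ` {m. \<phi> m \<noteq> 0}"
proof (rule ccontr)
  assume "t \<notin> (\<lambda>m. m div pprod K q) ` {m. \<phi> m \<noteq> 0}"
  then have "{m. \<phi> m \<noteq> 0 \<and> m div pprod K q = t} = {}" by blast
  then show False using assms unfolding block_mass_def by (simp only: sum.empty)
qed

lemma block_mass_mod_pprod: "block_mass K q \<phi> (r mod pprod K q) t = block_mass K q \<phi> r t"
  unfolding block_mass_def coverage_mod_pprod ..

lemma sum_block_mass:
  assumes "finite {m. \<phi> m \<noteq> 0}" and "finite T"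
  shows "(\<Sum>t\<in>T. block_mass K q \<phi> r t)
       = (\<Sum>m | \<phi> m \<noteq> 0 \<and> m div pprod K q \<in> T. real (coverage K q r m) * \<bar>\<phi> m\<bar>)"
proof -
  let ?S = "{m. \<phi> m \<noteq> 0 \<and> m div pprod K q \<in> T}"
  have "(\<Sum>t\<in>T. block_mass K q \<phi> r t)
      = (\<Sum>t\<in>T. \<Sum>m \<in> {m \<in> ?S. m div pprod K q = t}. real (coverage K q r m) * \<bar>\<phi> m\<bar>)"
    unfolding block_mass_def by (intro sum.cong refl arg_cong [where f = "sum _"]) auto
  also have "\<dots> = (\<Sum>m\<in>?S. real (coverage K q r m) * \<bar>\<phi> m\<bar>)"
    using assms by (intro sum.group) auto
  finally show ?thesis .
qed

lemma sum_block_mass_total: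
  assumes qpos: "\<forall>j\<in>{1..K}. q j > 0" and fin: "finite {m. \<phi> m \<noteq> 0}"
  shows "(\<Sum>r\<in>{0..<pprod K q}. \<Sum>t\<in>(\<lambda>m. m div pprod K q) ` {m. \<phi> m \<noteq> 0}. block_mass K q \<phi> r t)
       = (\<Sum>j=1..K. real_of_int (qtilde K q j)) * l1norm \<phi>"
proof -
  have "(\<Sum>r\<in>{0..<pprod K q}. \<Sum>t\<in>(\<lambda>m. m div pprod K q) ` {m. \<phi> m \<noteq> 0}. block_mass K q \<phi> r t)
      = (\<Sum>r\<in>{0..<pprod K q}. \<Sum>m | \<phi> m \<noteq> 0. real (coverage K q r m) * \<bar>\<phi> m\<bar>)"
  proof -
    have "{m. \<phi> m \<noteq> 0 \<and> m div pprod K q \<in> (\<lambda>m. m div pprod K q) ` {m. \<phi> m \<noteq> 0}} = {m. \<phi> m \<noteq> 0}"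
      by blast
    then show ?thesis using fin by (simp add: sum_block_mass)
  qed
  also have "\<dots> = (\<Sum>m | \<phi> m \<noteq> 0. (\<Sum>r\<in>{0..<pprod K q}. real (coverage K q r m)) * \<bar>\<phi> m\<bar>)"
    by (simp add: sum.swap [of _ "{0..<pprod K q}"] sum_distrib_right)
  also have "\<dots> = (\<Sum>j=1..K. real_of_int (qtilde K q j)) * l1norm \<phi>"
    unfolding sum_coverage_period [OF qpos] l1norm_def by (simp add: sum_distrib_left mult.commute)
  finally show ?thesis .
qed

lemma nu_mult_Bj:
  assumes qpos: "\<forall>j\<in>{1..K}. q j > 0" and j: "j \<in> {1..K}"
  defines "p \<equiv> pprod K q"
  shows "real_of_int (nu K q n N j) * Bj K q \<phi> n N j
       = (\<Sum>m | m div p \<in> {n div p..(n + int N) div p} \<and> q j dvd m - n. \<phi> m)"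
proof -
  have p: "p > 0" unfolding p_def using pprod_pos [OF qpos] .
  have qj: "q j > 0" using qpos j by blast
  have nz: "nu K q n N j \<noteq> 0"
    using Nprime_pos [OF p [unfolded p_def], of n N] qtilde_pos [OF qpos j] by (simp add: nu_def)
  have inj: "inj_on (\<lambda>l. n + l * q j) {l. l * q j \<in> Iset K q n N}"
    using qj by (auto simp: inj_on_def)
  have in_Iset: "l * q j \<in> Iset K q n N \<longleftrightarrow> (n + l * q j) div p \<in> {n div p..(n + int N) div p}"
    for l
    unfolding Iset_eq p_def [symmetric] div_in_atLeastAtMost_iff [OF p] by auto
  have img: "(\<lambda>l. n + l * q j) ` {l. l * q j \<in> Iset K q n N}
      = {m. m div p \<in> {n div p..(n + int N) div p} \<and> q j dvd m - n}"
  proof (intro set_eqI iffI)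
    fix m assume "m \<in> (\<lambda>l. n + l * q j) ` {l. l * q j \<in> Iset K q n N}"
    then show "m \<in> {m. m div p \<in> {n div p..(n + int N) div p} \<and> q j dvd m - n}"
      using in_Iset by auto
  next
    fix m assume m: "m \<in> {m. m div p \<in> {n div p..(n + int N) div p} \<and> q j dvd m - n}"
    then have "q j dvd m - n" by simp
    then obtain l where "m - n = q j * l" by (rule dvdE)
    then have l: "m = n + l * q j" by (simp add: algebra_simps)
    show "m \<in> (\<lambda>l. n + l * q j) ` {l. l * q j \<in> Iset K q n N}"
    proof (rule image_eqI)
      show "m = n + l * q j" by (rule l)
      show "l \<in> {l. l * q j \<in> Iset K q n N}" using m in_Iset [of l] unfolding l by simp
    qed
  qed
  show ?thesis using nz unfolding Bj_def img [symmetric] sum.reindex [OF inj] by (simp add: o_def)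
qed

lemma B_eq:
  assumes qpos: "\<forall>j\<in>{1..K}. q j > 0"
  defines "p \<equiv> pprod K q"
  shows "B K q \<phi> n N
       = (\<Sum>j=1..K. \<Sum>m | m div p \<in> {n div p..(n + int N) div p} \<and> q j dvd m - n. \<phi> m)
         / (real_of_int (Nprime K q n N) * (\<Sum>j=1..K. real_of_int (qtilde K q j)))"
proof -
  have num: "(\<Sum>j=1..K. real_of_int (nu K q n N j) * Bj K q \<phi> n N j)
      = (\<Sum>j=1..K. \<Sum>m | m div p \<in> {n div p..(n + int N) div p} \<and> q j dvd m - n. \<phi> m)"
    unfolding p_def by (rule sum.cong [OF refl]) (rule nu_mult_Bj [OF qpos])
  have den: "(\<Sum>j=1..K. real_of_int (nu K q n N j))
      = real_of_int (Nprime K q n N) * (\<Sum>j=1..K. real_of_int (qtilde K q j))"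
    by (simp add: nu_def sum_distrib_left)
  show ?thesis unfolding B_def num den ..
qed

lemma sum_progressions_eq_sum_block_mass:
  assumes p: "pprod K q > 0" and fin: "finite {m. \<phi> m \<noteq> 0}"
  shows "(\<Sum>j=1..K. \<Sum>m | m div pprod K q \<in> {a..b} \<and> q j dvd m - r. \<bar>\<phi> m\<bar>)
       = (\<Sum>t=a..b. block_mass K q \<phi> r t)"
proof -
  define M where "M j = {m. m div pprod K q \<in> {a..b} \<and> q j dvd m - r}" for j
  define Supp where "Supp = {m. \<phi> m \<noteq> 0 \<and> m div pprod K q \<in> {a..b}}"
  have "{m. m div pprod K q \<in> {a..b}} = {a * pprod K q..<(b + 1) * pprod K q}"
    unfolding div_in_atLeastAtMost_iff [OF p] by (rule Collect_mem_eq)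
  then have "finite {m. m div pprod K q \<in> {a..b}}" by simp
  then have finM: "finite (M j)" for j
    by (rule finite_subset [rotated]) (auto simp: M_def)
  have finSupp: "finite Supp" unfolding Supp_def using fin by (rule finite_subset [rotated]) auto
  have "(\<Sum>m\<in>M j. \<bar>\<phi> m\<bar>) = (\<Sum>m\<in>Supp. of_bool (q j dvd m - r) * \<bar>\<phi> m\<bar>)" for j
  proof -
    have "(\<Sum>m\<in>M j. \<bar>\<phi> m\<bar>) = (\<Sum>m\<in>Supp \<inter> {m. q j dvd m - r}. \<bar>\<phi> m\<bar>)"
      using finM by (rule sum.mono_neutral_right) (auto simp: M_def Supp_def)
    then show ?thesis using finSupp by simp
  qed
  then have "(\<Sum>j=1..K. \<Sum>m\<in>M j. \<bar>\<phi> m\<bar>)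
      = (\<Sum>j=1..K. \<Sum>m\<in>Supp. of_bool (q j dvd m - r) * \<bar>\<phi> m\<bar>)"
    by simp
  also have "\<dots> = (\<Sum>m\<in>Supp. real (coverage K q r m) * \<bar>\<phi> m\<bar>)"
    unfolding coverage_eq_sum sum_distrib_right by (rule sum.swap)
  also have "\<dots> = (\<Sum>t=a..b. block_mass K q \<phi> r t)"
    unfolding Supp_def using sum_block_mass [OF fin] by simp
  finally show ?thesis unfolding M_def .
qed

lemma abs_B_le_block_mass:
  assumes qpos: "\<forall>j\<in>{1..K}. q j > 0" and fin: "finite {m. \<phi> m \<noteq> 0}"
  defines "p \<equiv> pprod K q"
  shows "\<bar>B K q \<phi> n N\<bar>
       \<le> (\<Sum>t = n div p..(n + int N) div p. block_mass K q \<phi> n t)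
         / (real_of_int (Nprime K q n N) * (\<Sum>j=1..K. real_of_int (qtilde K q j)))"
proof -
  have p: "p > 0" unfolding p_def using pprod_pos [OF qpos] .
  define M where "M j = {m. m div p \<in> {n div p..(n + int N) div p} \<and> q j dvd m - n}" for j
  have den: "real_of_int (Nprime K q n N) * (\<Sum>j=1..K. real_of_int (qtilde K q j)) \<ge> 0"
    using Nprime_pos [OF p [unfolded p_def], of n N] qtilde_pos [OF qpos]
    by (intro mult_nonneg_nonneg sum_nonneg) fastforce+
  have "\<bar>\<Sum>j=1..K. \<Sum>m\<in>M j. \<phi> m\<bar> \<le> (\<Sum>j=1..K. \<bar>\<Sum>m\<in>M j. \<phi> m\<bar>)"
    by (rule sum_abs)
  also have "\<dots> \<le> (\<Sum>j=1..K. \<Sum>m\<in>M j. \<bar>\<phi> m\<bar>)"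
    by (intro sum_mono sum_abs)
  also have "\<dots> = (\<Sum>t = n div p..(n + int N) div p. block_mass K q \<phi> n t)"
    unfolding M_def p_def using p [unfolded p_def] fin by (rule sum_progressions_eq_sum_block_mass)
  finally have num: "\<bar>\<Sum>j=1..K. \<Sum>m\<in>M j. \<phi> m\<bar>
      \<le> (\<Sum>t = n div p..(n + int N) div p. block_mass K q \<phi> n t)" .
  have "\<bar>B K q \<phi> n N\<bar> = \<bar>\<Sum>j=1..K. \<Sum>m\<in>M j. \<phi> m\<bar>
      / (real_of_int (Nprime K q n N) * (\<Sum>j=1..K. real_of_int (qtilde K q j)))"
    using B_eq [OF qpos, of \<phi> n N] den unfolding p_def [symmetric] M_def by simp
  also have "\<dots> \<le> (\<Sum>t = n div p..(n + int N) div p. block_mass K q \<phi> n t)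
      / (real_of_int (Nprime K q n N) * (\<Sum>j=1..K. real_of_int (qtilde K q j)))"
    using num den by (rule divide_right_mono)
  finally show ?thesis .
qed

lemma Bstar_level_set_subset:
  assumes qpos: "\<forall>j\<in>{1..K}. q j > 0" and "K \<ge> 1" and fin: "finite {m. \<phi> m \<noteq> 0}"
  defines "p \<equiv> pprod K q" and "S \<equiv> \<Sum>j=1..K. real_of_int (qtilde K q j)"
  shows "{n. Bstar K q \<phi> n > ereal lam}
       \<subseteq> (\<Union>r\<in>{0..<p}. (\<lambda>a. a * p + r) ` exceeding_left_ends (lam * S) (block_mass K q \<phi> r))"
    (is "_ \<subseteq> ?U")
proof
  fix n assume "n \<in> {n. Bstar K q \<phi> n > ereal lam}"
  then obtain N where lam_less: "lam < \<bar>B K q \<phi> n N\<bar>"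
    unfolding Bstar_def by (auto simp: less_SUP_iff)
  have p: "p > 0" unfolding p_def using pprod_pos [OF qpos] .
  have S: "S > 0" unfolding S_def using sum_qtilde_pos [OF qpos \<open>K \<ge> 1\<close>] .
  define a where "a = n div p"
  define b where "b = (n + int N) div p"
  have "a \<le> b" unfolding a_def b_def using p by (intro zdiv_mono1) auto
  have "Nprime K q n N = b - a + 1" unfolding Nprime_def t0_eq t1_eq a_def b_def p_def by simp
  then have "\<bar>B K q \<phi> n N\<bar> \<le> (\<Sum>t=a..b. block_mass K q \<phi> n t) / (real_of_int (b - a + 1) * S)"
    using abs_B_le_block_mass [OF qpos fin, of n N] unfolding a_def b_def p_def S_def by simp
  then have "lam < (\<Sum>t=a..b. block_mass K q \<phi> n t) / (real_of_int (b - a + 1) * S)"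
    using lam_less by linarith
  then have "lam * S * real_of_int (b - a + 1) < (\<Sum>t=a..b. block_mass K q \<phi> (n mod p) t)"
    using \<open>a \<le> b\<close> S unfolding p_def block_mass_mod_pprod by (simp add: pos_less_divide_eq mult_ac)
  then have "a \<in> exceeding_left_ends (lam * S) (block_mass K q \<phi> (n mod p))"
    unfolding exceeding_left_ends_def using \<open>a \<le> b\<close> by auto
  moreover have "n = a * p + n mod p" by (simp add: a_def)
  moreover have "n mod p \<in> {0..<p}" using p by simp
  ultimately show "n \<in> ?U" by blast
qed

lemma Bstar_level_set_bound:
  assumes qpos: "\<forall>j\<in>{1..K}. q j > 0" and "K \<ge> 1" and fin: "finite {m. \<phi> m \<noteq> 0}" and "lam > 0"
  defines "p \<equiv> pprod K q" and "S \<equiv> \<Sum>j=1..K. real_of_int (qtilde K q j)"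
  shows "finite {n. Bstar K q \<phi> n > ereal lam}
    \<and> lam * S * real (card {n. Bstar K q \<phi> n > ereal lam})
        \<le> (\<Sum>r\<in>{0..<p}. \<Sum>t\<in>(\<lambda>m. m div p) ` {m. \<phi> m \<noteq> 0}. block_mass K q \<phi> r t)"
proof -
  let ?L = "{n. Bstar K q \<phi> n > ereal lam}"
  define E where "E r = exceeding_left_ends (lam * S) (block_mass K q \<phi> r)" for r
  have "lam * S > 0" unfolding S_def using sum_qtilde_pos [OF qpos \<open>K \<ge> 1\<close>] \<open>lam > 0\<close> by simp
  then have E: "finite (E r) \<and> lam * S * real (card (E r))
      \<le> (\<Sum>t\<in>(\<lambda>m. m div p) ` {m. \<phi> m \<noteq> 0}. block_mass K q \<phi> r t)" for r
    unfolding E_def p_def using fin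
    by (intro exceeding_left_ends_bound block_mass_nonneg block_mass_support) simp_all
  have level: "?L \<subseteq> (\<Union>r\<in>{0..<p}. (\<lambda>a. a * p + r) ` E r)"
    unfolding E_def p_def S_def by (rule Bstar_level_set_subset [OF qpos \<open>K \<ge> 1\<close> fin])
  moreover have fin_union: "finite (\<Union>r\<in>{0..<p}. (\<lambda>a. a * p + r) ` E r)" using E by blast
  ultimately have "card ?L \<le> card (\<Union>r\<in>{0..<p}. (\<lambda>a. a * p + r) ` E r)"
    by (rule card_mono [rotated])
  also have "\<dots> \<le> (\<Sum>r\<in>{0..<p}. card ((\<lambda>a. a * p + r) ` E r))" by (rule card_UN_le) simp
  also have "\<dots> \<le> (\<Sum>r\<in>{0..<p}. card (E r))" by (intro sum_mono card_image_le) (use E in blast)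
  finally have "real (card ?L) \<le> (\<Sum>r\<in>{0..<p}. real (card (E r)))"
    by (simp flip: of_nat_sum)
  then have "lam * S * real (card ?L) \<le> lam * S * (\<Sum>r\<in>{0..<p}. real (card (E r)))"
    by (rule mult_left_mono) (use \<open>lam * S > 0\<close> in simp)
  also have "\<dots> = (\<Sum>r\<in>{0..<p}. lam * S * real (card (E r)))" by (rule sum_distrib_left)
  also have "\<dots> \<le> (\<Sum>r\<in>{0..<p}. \<Sum>t\<in>(\<lambda>m. m div p) ` {m. \<phi> m \<noteq> 0}. block_mass K q \<phi> r t)"
    using E by (intro sum_mono) blast
  finally show ?thesis using finite_subset [OF level fin_union] by blast
qed

theorem lemma4p4:
  fixes K :: nat and q :: "nat \<Rightarrow> int" and \<phi> :: "int \<Rightarrow> real" and lam :: real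
  assumes "K \<ge> 1"
    and "\<forall>j\<in>{1..K}. prime (q j)"
    and "inj_on q {1..K}"
    and "\<forall>j\<in>{1..K}. \<forall>j'\<in>{1..K}. 1/2 < real_of_int (q j) / real_of_int (q j')
                                   \<and> real_of_int (q j) / real_of_int (q j') < 2"
    and "finite {n. \<phi> n \<noteq> 0}"
    and "lam > 0"
  shows "finite {n::int. Bstar K q \<phi> n > ereal lam}
         \<and> real (card {n::int. Bstar K q \<phi> n > ereal lam}) \<le> 4 / lam * l1norm \<phi>"
proof -
  have qpos: "\<forall>j\<in>{1..K}. q j > 0" using assms(2) by (simp add: prime_gt_0_int)
  define S where "S = (\<Sum>j=1..K. real_of_int (qtilde K q j))"
  have "S > 0" unfolding S_def using sum_qtilde_pos [OF qpos assms(1)] .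
  have "finite {n. Bstar K q \<phi> n > ereal lam}"
    and "lam * S * real (card {n. Bstar K q \<phi> n > ereal lam}) \<le> S * l1norm \<phi>"
    using Bstar_level_set_bound [OF qpos assms(1,5,6)] sum_block_mass_total [OF qpos assms(5)]
    unfolding S_def by simp_all
  moreover have "l1norm \<phi> \<ge> 0" unfolding l1norm_def by (simp add: sum_nonneg)
  ultimately show ?thesis
    using \<open>S > 0\<close> \<open>lam > 0\<close> by (simp add: field_simps)
qed

end
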